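(* For any fitness graph $\mathcal{G}$ and any seed set $S\subseteq V$, the Heterogeneous Moran process and the Loopy process started from $S$ have the same fixation probability.
   Context: A fitness graph is $\mathcal{G}=(G,(m,r))$ where $G=(V,E,w)$ is a strongly connected directed graph, $w(u,\cdot)$ is a probability distribution over out-neighbours of $u$, and $r,m\colon V\to(0,\infty)$. Without loss of generality every node has a self-loop $(u,u)\in E$ (with $w(u,u)=0$ if it was absent). For a configuration $X\subseteq V$ (set of mutants), $f_X(u)=m(u)$ if $u\in X$, else $r(u)$. Heterogeneous Moran process: from $X$, pick $u$ with probability $f_X(u)/\sum_v f_X(v)$, then $v$ with probability $w(u,v)$, and $v$ takes the type of $u$. Loopy process: let $f_{\max}=\max_{u\in V}\max\{r(u),m(u)\}$; from $X$, pick $u$ uniformly with probability $1/|V|$, then pick $v$ with probability $w_X(u,v)$, where $w_X(u,v)=\frac{f_X(u)}{f_{\max}}w(u,v)$ for $v\ne u$ and $w_X(u,u)=1-\frac{f_X(u)}{f_{\max}}(1-w(u,u))$, and $v$ takes the type of $u$. Both start at $S$; the fixation probability is the probability of eventually reaching configuration $V$. *)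

theory Defs
  imports Complex_Main
begin

text \<open>Vertices are the elements of a finite type 'v (so V = UNIV).
  The graph is given by an edge relation E and weights w.\<close>

definition fitness_graph ::
  "('v::finite \<times> 'v) set \<Rightarrow> ('v \<Rightarrow> 'v \<Rightarrow> real) \<Rightarrow> ('v \<Rightarrow> real) \<Rightarrow> ('v \<Rightarrow> real) \<Rightarrow> bool" where
  "fitness_graph E w r m \<longleftrightarrow>
     (\<forall>u v. (u, v) \<in> E\<^sup>*) \<and>
     (\<forall>u. (u, u) \<in> E) \<and>
     (\<forall>u v. w u v \<ge> 0) \<and>
     (\<forall>u v. w u v \<noteq> 0 \<longrightarrow> (u, v) \<in> E) \<and>
     (\<forall>u v. (u, v) \<in> E \<and> u \<noteq> v \<longrightarrow> w u v > 0) \<and>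
     (\<forall>u. (\<Sum>v\<in>UNIV. w u v) = 1) \<and>
     (\<forall>u. r u > 0 \<and> m u > 0)"

definition fit :: "('v \<Rightarrow> real) \<Rightarrow> ('v \<Rightarrow> real) \<Rightarrow> 'v set \<Rightarrow> 'v \<Rightarrow> real" where
  "fit r m X u = (if u \<in> X then m u else r u)"

text \<open>Effect of "u reproduces onto v": v takes the type of u.\<close>
definition upd :: "'v set \<Rightarrow> 'v \<Rightarrow> 'v \<Rightarrow> 'v set" where
  "upd X u v = (if u \<in> X then insert v X else X - {v})"

definition moran_step :: "('v::finite \<Rightarrow> 'v \<Rightarrow> real) \<Rightarrow> ('v \<Rightarrow> real) \<Rightarrow> ('v \<Rightarrow> real)
    \<Rightarrow> 'v set \<Rightarrow> 'v \<Rightarrow> 'v \<Rightarrow> real" where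
  "moran_step w r m X u v = fit r m X u / (\<Sum>x\<in>UNIV. fit r m X x) * w u v"

definition fmax :: "('v::finite \<Rightarrow> real) \<Rightarrow> ('v \<Rightarrow> real) \<Rightarrow> real" where
  "fmax r m = Max (range (\<lambda>u. max (r u) (m u)))"

definition loopy_w :: "('v::finite \<Rightarrow> 'v \<Rightarrow> real) \<Rightarrow> ('v \<Rightarrow> real) \<Rightarrow> ('v \<Rightarrow> real)
    \<Rightarrow> 'v set \<Rightarrow> 'v \<Rightarrow> 'v \<Rightarrow> real" where
  "loopy_w w r m X u v =
     (if v \<noteq> u then fit r m X u / fmax r m * w u v
      else 1 - fit r m X u / fmax r m * (1 - w u u))"

definition loopy_step :: "('v::finite \<Rightarrow> 'v \<Rightarrow> real) \<Rightarrow> ('v \<Rightarrow> real) \<Rightarrow> ('v \<Rightarrow> real)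
    \<Rightarrow> 'v set \<Rightarrow> 'v \<Rightarrow> 'v \<Rightarrow> real" where
  "loopy_step w r m X u v = 1 / real (card (UNIV :: 'v set)) * loopy_w w r m X u v"

text \<open>Probability that the chain with step probabilities P (over pairs (u,v)),
  started at X, is in the absorbing configuration V = UNIV after n steps,
  i.e. has reached V within n steps.\<close>
fun hit :: "('v::finite set \<Rightarrow> 'v \<Rightarrow> 'v \<Rightarrow> real) \<Rightarrow> nat \<Rightarrow> 'v set \<Rightarrow> real" where
  "hit P 0 X = (if X = UNIV then 1 else 0)"
| "hit P (Suc n) X = (if X = UNIV then 1
      else (\<Sum>u\<in>UNIV. \<Sum>v\<in>UNIV. P X u v * hit P n (upd X u v)))"

definition fixation_prob :: "('v::finite set \<Rightarrow> 'v \<Rightarrow> 'v \<Rightarrow> real) \<Rightarrow> 'v set \<Rightarrow> real" where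
  "fixation_prob P S = (SUP n. hit P n S)"

end

theory Submission
  imports Defs
begin

(* The fixation probability of a chain is the least non-negative solution h of the absorption
   equations h V = 1 and h X = E[h(next configuration) | X] for X \<noteq> V.  In the Loopy process
   the expected change of any h in one step is the corresponding Moran quantity multiplied by
   the positive factor (\<Sum>x. f_X(x)) / (|V| f_max): the extra self-loop mass only slows the
   chain down.  Hence both processes have the same absorption equations, and so the same
   least solution. *)

definition expected_next :: "('v::finite set \<Rightarrow> 'v \<Rightarrow> 'v \<Rightarrow> real) \<Rightarrow> ('v set \<Rightarrow> real) \<Rightarrow> 'v set \<Rightarrow> real" where
  "expected_next P h X = (\<Sum>u\<in>UNIV. \<Sum>v\<in>UNIV. P X u v * h (upd X u v))"

definition absorption_step :: "('v::finite set \<Rightarrow> 'v \<Rightarrow> 'v \<Rightarrow> real) \<Rightarrow> ('v set \<Rightarrow> real) \<Rightarrow> 'v set \<Rightarrow> real" where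
  "absorption_step P h X = (if X = UNIV then 1 else expected_next P h X)"

lemma expected_next_one: "expected_next P (\<lambda>_. 1) X = (\<Sum>u\<in>UNIV. \<Sum>v\<in>UNIV. P X u v)"
  by (simp add: expected_next_def)

lemma hit_Suc_absorption_step: "hit P (Suc n) X = absorption_step P (hit P n) X"
  by (simp add: absorption_step_def expected_next_def)

locale substochastic =
  fixes P :: "'v::finite set \<Rightarrow> 'v \<Rightarrow> 'v \<Rightarrow> real"
  assumes nonneg: "P X u v \<ge> 0"
    and total_le_1: "(\<Sum>u\<in>UNIV. \<Sum>v\<in>UNIV. P X u v) \<le> 1"
begin

lemma absorption_step_mono:
  assumes "\<And>Y. g Y \<le> h Y"
  shows "absorption_step P g X \<le> absorption_step P h X"
  unfolding absorption_step_def expected_next_def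
  using assms nonneg by (auto intro!: sum_mono mult_left_mono)

lemma hit_nonneg: "hit P n X \<ge> 0"
  using nonneg by (induction n arbitrary: X) (auto intro!: sum_nonneg)

lemma hit_le_supersolution:
  assumes h_nonneg: "\<And>X. h X \<ge> 0" and super: "\<And>X. absorption_step P h X \<le> h X"
  shows "hit P n X \<le> h X"
proof (induction n arbitrary: X)
  case 0
  have "1 \<le> h UNIV" using super[of UNIV] by (simp add: absorption_step_def)
  then show ?case using h_nonneg[of X] by simp
next
  case (Suc n)
  have "hit P (Suc n) X = absorption_step P (hit P n) X" by (rule hit_Suc_absorption_step)
  also have "\<dots> \<le> absorption_step P h X" by (rule absorption_step_mono[OF Suc])
  also have "\<dots> \<le> h X" by (rule super)
  finally show ?case .
qed

lemma hit_le_1: "hit P n X \<le> 1"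
  using total_le_1 by (intro hit_le_supersolution) (simp_all add: absorption_step_def expected_next_def)

lemma incseq_hit: "incseq (\<lambda>n. hit P n X)"
proof (rule incseq_SucI)
  show "hit P n X \<le> hit P (Suc n) X" for n
  proof (induction n arbitrary: X)
    case 0
    show ?case using hit_nonneg[of "Suc 0" X] by (cases "X = UNIV") auto
  next
    case (Suc n)
    have "hit P (Suc n) X = absorption_step P (hit P n) X" by (rule hit_Suc_absorption_step)
    also have "\<dots> \<le> absorption_step P (hit P (Suc n)) X" by (rule absorption_step_mono[OF Suc])
    also have "\<dots> = hit P (Suc (Suc n)) X" by (rule hit_Suc_absorption_step[symmetric])
    finally show ?case .
  qed
qed

lemma hit_tendsto_fixation_prob: "(\<lambda>n. hit P n X) \<longlonglongrightarrow> fixation_prob P X"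
  unfolding fixation_prob_def
  by (rule LIMSEQ_incseq_SUP) (auto intro!: bdd_aboveI hit_le_1 incseq_hit)

lemma fixation_prob_nonneg: "fixation_prob P X \<ge> 0"
  using hit_tendsto_fixation_prob by (rule LIMSEQ_le_const) (auto intro: hit_nonneg)

lemma fixation_prob_le_supersolution:
  assumes "\<And>X. h X \<ge> 0" and "\<And>X. absorption_step P h X \<le> h X"
  shows "fixation_prob P X \<le> h X"
  using hit_tendsto_fixation_prob by (rule LIMSEQ_le_const2) (auto intro: hit_le_supersolution assms)

lemma absorption_step_fixation_prob: "absorption_step P (fixation_prob P) X = fixation_prob P X"
proof (rule LIMSEQ_unique)
  show "(\<lambda>n. absorption_step P (hit P n) X) \<longlonglongrightarrow> absorption_step P (fixation_prob P) X"
    unfolding absorption_step_def expected_next_def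
    by (auto intro!: tendsto_sum tendsto_mult_left hit_tendsto_fixation_prob)
  show "(\<lambda>n. absorption_step P (hit P n) X) \<longlonglongrightarrow> fixation_prob P X"
    using LIMSEQ_Suc[OF hit_tendsto_fixation_prob] by (simp only: hit_Suc_absorption_step)
qed

end

lemma fixation_prob_eqI:
  assumes "substochastic P" and "substochastic Q"
    and same_harmonic: "\<And>h X. expected_next Q h X = h X \<longleftrightarrow> expected_next P h X = h X"
  shows "fixation_prob P S = fixation_prob Q S"
proof -
  have le: "fixation_prob Q' X \<le> fixation_prob P' X"
    if "substochastic P'" "substochastic Q'"
      and "\<And>h X. expected_next Q' h X = h X \<longleftrightarrow> expected_next P' h X = h X" for P' Q' X
  proof -
    interpret P': substochastic P' by fact
    interpret Q': substochastic Q' by fact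
    have "absorption_step Q' (fixation_prob P') Y = fixation_prob P' Y" for Y
      using P'.absorption_step_fixation_prob[of Y] that(3)
      by (cases "Y = UNIV") (simp_all add: absorption_step_def)
    then show ?thesis by (intro Q'.fixation_prob_le_supersolution P'.fixation_prob_nonneg) simp
  qed
  show ?thesis
    using le[OF assms(2,1) same_harmonic[symmetric]] le[OF assms(1,2) same_harmonic]
    by (rule order_antisym)
qed

lemma fit_le_fmax:
  fixes r m :: "'v::finite \<Rightarrow> real"
  shows "fit r m X u \<le> fmax r m"
proof -
  have "max (r u) (m u) \<le> fmax r m" unfolding fmax_def by (rule Max_ge) auto
  then show ?thesis by (auto simp: fit_def)
qed

lemma upd_self [simp]: "upd X u u = X"
  by (auto simp: upd_def)

lemma sum_loopy_w:
  fixes w :: "'v::finite \<Rightarrow> 'v \<Rightarrow> real"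
  shows "(\<Sum>v\<in>UNIV. loopy_w w r m X u v * h (upd X u v))
     = h X + fit r m X u / fmax r m * ((\<Sum>v\<in>UNIV. w u v * h (upd X u v)) - h X)"
proof -
  have split_self: "(\<Sum>v\<in>UNIV. g v * h (upd X u v)) = g u * h X + (\<Sum>v\<in>UNIV-{u}. g v * h (upd X u v))"
    for g :: "'v \<Rightarrow> real"
    by (subst sum.remove[of UNIV u]) auto
  define a where "a = fit r m X u / fmax r m"
  have "(\<Sum>v\<in>UNIV. loopy_w w r m X u v * h (upd X u v))
      = loopy_w w r m X u u * h X + (\<Sum>v\<in>UNIV-{u}. loopy_w w r m X u v * h (upd X u v))"
    by (rule split_self)
  also have "(\<Sum>v\<in>UNIV-{u}. loopy_w w r m X u v * h (upd X u v))
      = a * (\<Sum>v\<in>UNIV-{u}. w u v * h (upd X u v))"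
    by (auto simp: sum_distrib_left loopy_w_def a_def intro!: sum.cong)
  also have "(\<Sum>v\<in>UNIV-{u}. w u v * h (upd X u v)) = (\<Sum>v\<in>UNIV. w u v * h (upd X u v)) - w u u * h X"
    using split_self[of "w u"] by simp
  finally show ?thesis
    by (simp add: loopy_w_def a_def[symmetric] algebra_simps)
qed

lemma expected_next_moran_step:
  "expected_next (moran_step w r m) h X
     = (\<Sum>u\<in>UNIV. fit r m X u * (\<Sum>v\<in>UNIV. w u v * h (upd X u v))) / (\<Sum>x\<in>UNIV. fit r m X x)"
  by (simp add: expected_next_def moran_step_def sum_distrib_left sum_divide_distrib mult.assoc)

locale positive_fitness =
  fixes r m :: "'v::finite \<Rightarrow> real"
  assumes r_pos: "r u > 0" and m_pos: "m u > 0"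
begin

lemma fit_pos: "fit r m X u > 0"
  using r_pos m_pos by (simp add: fit_def)

lemma fmax_pos: "fmax r m > 0"
  using fit_pos fit_le_fmax by (rule less_le_trans)

lemma sum_fit_pos: "(\<Sum>x\<in>UNIV. fit r m X x) > 0"
  using fit_pos by (intro sum_pos) auto

lemma expected_next_loopy_step:
  fixes w :: "'v::finite \<Rightarrow> 'v \<Rightarrow> real"
  shows "expected_next (loopy_step w r m) h X - h X
     = (\<Sum>x\<in>UNIV. fit r m X x) / (real (card (UNIV :: 'v set)) * fmax r m)
       * (expected_next (moran_step w r m) h X - h X)"
proof -
  define F where "F = (\<Sum>x\<in>UNIV. fit r m X x)"
  define A where "A u = (\<Sum>v\<in>UNIV. w u v * h (upd X u v))" for u
  have "F > 0" unfolding F_def by (rule sum_fit_pos)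
  have "expected_next (loopy_step w r m) h X
      = (\<Sum>u\<in>UNIV. (h X + fit r m X u / fmax r m * (A u - h X)) / real (card (UNIV :: 'v set)))"
    by (simp add: expected_next_def loopy_step_def sum_loopy_w A_def flip: sum_divide_distrib)
  also have "\<dots> = h X + ((\<Sum>u\<in>UNIV. fit r m X u * A u) - F * h X) / (real (card (UNIV :: 'v set)) * fmax r m)"
    by (simp add: F_def sum.distrib sum_subtractf sum_distrib_right right_diff_distrib
        divide_simps flip: sum_divide_distrib)
  also have "\<dots> = h X + F / (real (card (UNIV :: 'v set)) * fmax r m) * ((\<Sum>u\<in>UNIV. fit r m X u * A u) / F - h X)"
    using \<open>F > 0\<close> by (simp add: diff_divide_distrib right_diff_distrib)
  finally show ?thesis
    by (simp add: expected_next_moran_step A_def F_def)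
qed

lemma expected_next_loopy_step_eq_iff:
  "expected_next (loopy_step w r m) h X = h X \<longleftrightarrow> expected_next (moran_step w r m) h X = h X"
proof -
  have "(\<Sum>x\<in>UNIV. fit r m X x) / (real (card (UNIV :: 'v set)) * fmax r m) > 0"
    using sum_fit_pos fmax_pos by (simp add: finite_UNIV_card_ge_0)
  then show ?thesis
    using expected_next_loopy_step[of w h X] by auto
qed

end

locale fitness_weights = positive_fitness r m for r m :: "'v::finite \<Rightarrow> real" +
  fixes w :: "'v \<Rightarrow> 'v \<Rightarrow> real"
  assumes w_nonneg: "w u v \<ge> 0" and w_sum: "(\<Sum>v\<in>UNIV. w u v) = 1"
begin

lemma w_le_1: "w u v \<le> 1"
  using member_le_sum[of v UNIV "w u"] w_nonneg w_sum[of u] by simp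

lemma sum_moran_step: "(\<Sum>u\<in>UNIV. \<Sum>v\<in>UNIV. moran_step w r m X u v) = 1"
  using sum_fit_pos[of X] by (simp add: expected_next_moran_step w_sum flip: expected_next_one)

lemma substochastic_moran_step: "substochastic (moran_step w r m)"
proof
  show "moran_step w r m X u v \<ge> 0" for X u v
    using fit_pos[of X u] sum_fit_pos[of X] w_nonneg[of u v] by (simp add: moran_step_def)
  show "(\<Sum>u\<in>UNIV. \<Sum>v\<in>UNIV. moran_step w r m X u v) \<le> 1" for X
    by (simp add: sum_moran_step)
qed

lemma loopy_w_nonneg: "loopy_w w r m X u v \<ge> 0"
proof -
  define a where "a = fit r m X u / fmax r m"
  have "0 \<le> a" and "a \<le> 1"
    using fit_pos[of X u] fit_le_fmax[of r m X u] fmax_pos by (simp_all add: a_def)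
  then have "a * (1 - w u u) \<le> 1"
    using w_nonneg[of u u] w_le_1[of u u] by (simp add: mult_le_one)
  then show ?thesis
    using \<open>0 \<le> a\<close> w_nonneg[of u v] by (simp add: loopy_w_def a_def[symmetric])
qed

lemma substochastic_loopy_step: "substochastic (loopy_step w r m)"
proof
  show "loopy_step w r m X u v \<ge> 0" for X u v
    using loopy_w_nonneg by (simp add: loopy_step_def)
  show "(\<Sum>u\<in>UNIV. \<Sum>v\<in>UNIV. loopy_step w r m X u v) \<le> 1" for X
    using expected_next_loopy_step_eq_iff[of w "\<lambda>_. 1" X] sum_moran_step[of X]
    by (simp add: expected_next_one)
qed

end

theorem lemma5:
  fixes E :: "('v::finite \<times> 'v) set" and w :: "'v \<Rightarrow> 'v \<Rightarrow> real"
    and r m :: "'v \<Rightarrow> real" and S :: "'v set"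
  assumes "fitness_graph E w r m"
  shows "fixation_prob (moran_step w r m) S = fixation_prob (loopy_step w r m) S"
proof -
  interpret fitness_weights r m w
    using assms by unfold_locales (simp_all add: fitness_graph_def)
  show ?thesis
    using substochastic_moran_step substochastic_loopy_step expected_next_loopy_step_eq_iff
    by (rule fixation_prob_eqI)
qed

end
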